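(* Let $\mathcal X=\{x_{n,k}: n\in\mathbb N,\ k=1,\dots,L_n\}\subseteq\mathbb T$ be a Marcinkiewicz–Zygmund family with weights $\tau=\{\tau_{n,k}\}$ and constants $0<A\le B$ (as defined in the context), and let $\kappa=B/A$. For a continuous function $f$ on $\mathbb T$ and $n\in\mathbb N$ let $p_n\in\mathcal T_n$ be the solution of the least squares problem $$p_n=\operatorname{argmin}_{p\in\mathcal T_n}\sum_{k=1}^{L_n}|f(x_{n,k})-p(x_{n,k})|^2\tau_{n,k}.$$ (i) If $f\in H^\sigma(\mathbb T)$ with $\sigma>1/2$, then $$\|f-p_n\|_2\le C_\sigma\sqrt{1+\kappa^2}\,\|f\|_{H^\sigma}\,n^{-\sigma+1/2}\quad\text{for all } n\in\mathbb N,$$ with a constant $C_\sigma$ depending only on $\sigma$ (one may take $C_\sigma=(\sigma-1/2)^{-1/2}$). (ii) If $f$ extends to an analytic function on the strip $\{z\in\mathbb C:|\operatorname{Im} z|<\rho_0\}$ for some $\rho_0>0$, then for every $\rho<\rho_0$ one has $\|f-p_n\|_2=\mathcal O(e^{-\rho n})$ as $n\to\infty$.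
   Context: $\mathbb T=\mathbb R/\mathbb Z$, identified with $(-1/2,1/2]$ and equipped with Lebesgue measure; $\|\cdot\|_2$ is the $L^2(\mathbb T)$-norm. $\mathcal T_n$ is the space of trigonometric polynomials $p(x)=\sum_{k=-n}^n c_ke^{2\pi i kx}$ of degree $n$. For $f\in L^2(\mathbb T)$, $\hat f(k)=\int_0^1 f(x)e^{-2\pi ikx}\,dx$. The Sobolev space $H^\sigma(\mathbb T)$ consists of $f$ with $\|f\|_{H^\sigma}=\big(\sum_{k\in\mathbb Z}|\hat f(k)|^2(1+k^2)^\sigma\big)^{1/2}<\infty$. A doubly-indexed set of points $\mathcal X=\{x_{n,k}: n\in\mathbb N, k=1,\dots,L_n\}\subseteq\mathbb T$ with weights $\tau_{n,k}\in(0,\infty)$ is called a Marcinkiewicz–Zygmund family if there exist constants $A,B>0$, independent of $n$, such that $A\|p\|_2^2\le\sum_{k=1}^{L_n}|p(x_{n,k})|^2\tau_{n,k}\le B\|p\|_2^2$ for all $p\in\mathcal T_n$ and all $n\in\mathbb N$. *)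

theory Defs
  imports "HOL-Analysis.Analysis" "HOL-Library.Landau_Symbols"
begin

text \<open>Functions on the torus T = R/Z are represented as 1-periodic functions on the reals.\<close>

definition cont_on_torus :: "(real \<Rightarrow> complex) \<Rightarrow> bool" where
  "cont_on_torus f \<longleftrightarrow> continuous_on UNIV f \<and> (\<forall>x. f (x + 1) = f x)"

definition L2norm :: "(real \<Rightarrow> complex) \<Rightarrow> real" where
  "L2norm f = sqrt (integral {0..1} (\<lambda>x. (cmod (f x))\<^sup>2))"

definition fourier_coeff :: "(real \<Rightarrow> complex) \<Rightarrow> int \<Rightarrow> complex" where
  "fourier_coeff f k = integral {0..1} (\<lambda>x. f x * exp (- 2 * pi * \<i> * of_int k * of_real x))"

definition trig_polys :: "nat \<Rightarrow> (real \<Rightarrow> complex) set" where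
  "trig_polys n = {p. \<exists>c :: int \<Rightarrow> complex.
      p = (\<lambda>x. \<Sum>k\<in>{- int n..int n}. c k * exp (2 * pi * \<i> * of_int k * of_real x))}"

definition in_Sobolev :: "real \<Rightarrow> (real \<Rightarrow> complex) \<Rightarrow> bool" where
  "in_Sobolev \<sigma> f \<longleftrightarrow>
     (\<lambda>k::int. (cmod (fourier_coeff f k))\<^sup>2 * (1 + (real_of_int k)\<^sup>2) powr \<sigma>) summable_on UNIV"

definition Sobolev_norm :: "real \<Rightarrow> (real \<Rightarrow> complex) \<Rightarrow> real" where
  "Sobolev_norm \<sigma> f =
     sqrt (infsum (\<lambda>k::int. (cmod (fourier_coeff f k))\<^sup>2 * (1 + (real_of_int k)\<^sup>2) powr \<sigma>) UNIV)"

definition MZ_family ::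
  "(nat \<Rightarrow> nat) \<Rightarrow> (nat \<Rightarrow> nat \<Rightarrow> real) \<Rightarrow> (nat \<Rightarrow> nat \<Rightarrow> real) \<Rightarrow> real \<Rightarrow> real \<Rightarrow> bool" where
  "MZ_family L X \<tau> A B \<longleftrightarrow> 0 < A \<and> 0 < B \<and>
     (\<forall>n\<ge>1. \<forall>k\<in>{1..L n}. X n k \<in> {-1/2<..1/2} \<and> 0 < \<tau> n k) \<and>
     (\<forall>n\<ge>1. \<forall>p\<in>trig_polys n.
        A * (L2norm p)\<^sup>2 \<le> (\<Sum>k=1..L n. (cmod (p (X n k)))\<^sup>2 * \<tau> n k) \<and>
        (\<Sum>k=1..L n. (cmod (p (X n k)))\<^sup>2 * \<tau> n k) \<le> B * (L2norm p)\<^sup>2)"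

definition ls_solution ::
  "(nat \<Rightarrow> nat) \<Rightarrow> (nat \<Rightarrow> nat \<Rightarrow> real) \<Rightarrow> (nat \<Rightarrow> nat \<Rightarrow> real) \<Rightarrow> (real \<Rightarrow> complex)
     \<Rightarrow> nat \<Rightarrow> (real \<Rightarrow> complex) \<Rightarrow> bool" where
  "ls_solution L X \<tau> f n p \<longleftrightarrow> p \<in> trig_polys n \<and>
     (\<forall>q\<in>trig_polys n.
        (\<Sum>k=1..L n. (cmod (f (X n k) - p (X n k)))\<^sup>2 * \<tau> n k)
          \<le> (\<Sum>k=1..L n. (cmod (f (X n k) - q (X n k)))\<^sup>2 * \<tau> n k))"

end

theory Submission
  imports Defs "HOL-Complex_Analysis.Complex_Analysis"
begin

(* Let S_n f be the n-th Fourier partial sum of f and E = sum_{|k|>n} |hat f(k)|.  The error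
   f - p_n = (f - S_n f) + (S_n f - p_n) is an L2-orthogonal splitting.  A continuous periodic
   function with absolutely summable Fourier coefficients is the sum of its Fourier series
   (uniqueness comes from Stone-Weierstrass on the unit circle), so |f - S_n f| <= E pointwise.
   The second part q = S_n f - p_n has degree n, and since p_n is the weighted least-squares
   projection, the discrete norm of q at the nodes is at most that of f - S_n f, hence at most
   E^2 B; the Marcinkiewicz-Zygmund lower bound gives A ||q||^2 <= E^2 B.  So
   ||f - p_n|| <= sqrt (1 + kappa^2) E.  For Sobolev f, Cauchy-Schwarz against the weights
   (1 + k^2)^sigma bounds E; for f analytic on a strip, moving the line of integration of the
   Fourier integral inside the strip gives exponentially decaying coefficients. *)

definition trig_exp :: "int \<Rightarrow> real \<Rightarrow> complex" where
  "trig_exp k x = exp (2 * pi * \<i> * of_int k * of_real x)"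

lemma trig_exp_add: "trig_exp j x * trig_exp k x = trig_exp (j + k) x"
  unfolding trig_exp_def by (simp add: exp_add[symmetric] algebra_simps)

lemma trig_exp_0 [simp]: "trig_exp 0 x = 1"
  by (simp add: trig_exp_def)

lemma trig_exp_add_arg: "trig_exp k (x + y) = trig_exp k x * trig_exp k y"
  unfolding trig_exp_def by (simp add: exp_add[symmetric] distrib_left)

lemma trig_exp_periodic [simp]: "trig_exp k (x + 1) = trig_exp k x"
proof -
  have "trig_exp k 1 = 1"
    using exp_integer_2pi[of "of_int k"] by (simp add: trig_exp_def mult_ac)
  then show ?thesis by (simp add: trig_exp_add_arg)
qed

lemma norm_trig_exp [simp]: "norm (trig_exp k x) = 1"
  unfolding trig_exp_def by (simp add: norm_exp_eq_Re)

lemma cnj_trig_exp: "cnj (trig_exp k x) = trig_exp (- k) x"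
  unfolding trig_exp_def by (simp add: exp_cnj)

lemma continuous_on_trig_exp [continuous_intros]: "continuous_on S (trig_exp k)"
  unfolding trig_exp_def by (intro continuous_intros)

lemma fourier_coeff_eq: "fourier_coeff f k = integral {0..1} (\<lambda>x. f x * trig_exp (- k) x)"
  unfolding fourier_coeff_def trig_exp_def by simp

lemma has_integral_trig_exp: "(trig_exp k has_integral (if k = 0 then 1 else 0)) {0..1}"
proof (cases "k = 0")
  case True
  then have "trig_exp k = (\<lambda>x. 1)" by (simp add: fun_eq_iff)
  then show ?thesis using True has_integral_const_real[of "1::complex" 0 1] by simp
next
  case False
  define c where "c = 2 * pi * \<i> * of_int k"
  have c: "c \<noteq> 0" using False by (simp add: c_def)
  have "((\<lambda>x. trig_exp k x / c) has_vector_derivative trig_exp k x) (at x within {0..1})" for x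
  proof -
    have "((\<lambda>z. exp (c * z) / c) has_field_derivative exp (c * of_real x)) (at (of_real x))"
      using c by (auto intro!: derivative_eq_intros)
    from has_vector_derivative_real_field[OF this] show ?thesis
      by (simp add: trig_exp_def c_def mult.assoc has_vector_derivative_at_within)
  qed
  then have "(trig_exp k has_integral (trig_exp k 1 / c - trig_exp k 0 / c)) {0..1}"
    by (intro fundamental_theorem_of_calculus) auto
  moreover have "trig_exp k 1 = trig_exp k 0" using trig_exp_periodic[of k 0] by simp
  ultimately show ?thesis using False by simp
qed

lemma integral_trig_exp: "integral {0..1} (trig_exp k) = (if k = 0 then 1 else 0)"
  using has_integral_trig_exp by (rule integral_unique)

lemma integrable_continuous_01:
  fixes f :: "real \<Rightarrow> 'a::banach"
  shows "continuous_on UNIV f \<Longrightarrow> f integrable_on {0..1}"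
  by (rule integrable_continuous_interval) (rule continuous_on_subset[OF _ subset_UNIV])

lemma periodic_int:
  fixes h :: "real \<Rightarrow> 'a"
  assumes "\<And>x. h (x + 1) = h x"
  shows "h (x + of_int m) = h x"
proof -
  have nat: "h (y + of_nat j) = h y" for y j
  proof (induction j)
    case (Suc j)
    have "h (y + of_nat (Suc j)) = h (y + of_nat j + 1)" by (simp add: add_ac)
    then show ?case using assms Suc.IH by simp
  qed simp
  show ?thesis
  proof (cases "m \<ge> 0")
    case True
    then show ?thesis using nat[of x "nat m"] by simp
  next
    case False
    then show ?thesis using nat[of "x + of_int m" "nat (- m)"] by simp
  qed
qed

definition trig_poly :: "nat \<Rightarrow> (int \<Rightarrow> complex) \<Rightarrow> real \<Rightarrow> complex" where
  "trig_poly n c x = (\<Sum>k\<in>{- int n..int n}. c k * trig_exp k x)"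

lemma trig_polys_iff: "p \<in> trig_polys n \<longleftrightarrow> (\<exists>c. p = trig_poly n c)"
  unfolding trig_polys_def trig_poly_def trig_exp_def by (simp add: fun_eq_iff)

lemma trig_poly_in_trig_polys [simp]: "trig_poly n c \<in> trig_polys n"
  using trig_polys_iff by blast

lemma continuous_on_trig_poly [continuous_intros]: "continuous_on S (trig_poly n c)"
  unfolding trig_poly_def by (intro continuous_intros)

lemma trig_poly_periodic [simp]: "trig_poly n c (x + 1) = trig_poly n c x"
  unfolding trig_poly_def by simp

lemma trig_poly_add_scaled:
  "trig_poly n c x + a * trig_poly n d x = trig_poly n (\<lambda>k. c k + a * d k) x"
  unfolding trig_poly_def by (simp add: sum.distrib sum_distrib_left algebra_simps)

lemma trig_poly_diff: "trig_poly n c x - trig_poly n d x = trig_poly n (\<lambda>k. c k - d k) x"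
  unfolding trig_poly_def by (simp add: sum_subtractf left_diff_distrib)

lemma trig_polys_add_scaled:
  assumes "p \<in> trig_polys n" "q \<in> trig_polys n"
  shows "(\<lambda>x. p x + a * q x) \<in> trig_polys n"
  using assms by (auto simp: trig_polys_iff trig_poly_add_scaled)

lemma trig_polys_diff:
  assumes "p \<in> trig_polys n" "q \<in> trig_polys n"
  shows "(\<lambda>x. p x - q x) \<in> trig_polys n"
  using assms by (auto simp: trig_polys_iff trig_poly_diff)

lemma const_in_trig_polys: "(\<lambda>x. c) \<in> trig_polys n"
proof -
  have "trig_poly n (\<lambda>k. if k = 0 then c else 0) x = (\<Sum>k\<in>{- int n..int n}. if k = 0 then c else 0)" for x
    unfolding trig_poly_def by (rule sum.cong) auto
  then have "(\<lambda>x. c) = trig_poly n (\<lambda>k. if k = 0 then c else 0)"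
    by (simp add: fun_eq_iff)
  then show ?thesis by simp
qed

lemma continuous_on_trig_polys: "p \<in> trig_polys n \<Longrightarrow> continuous_on S p"
  by (auto simp: trig_polys_iff intro: continuous_intros)

lemma fourier_coeff_trig_poly:
  "fourier_coeff (trig_poly n c) k = (if k \<in> {- int n..int n} then c k else 0)"
proof -
  have "fourier_coeff (trig_poly n c) k =
      integral {0..1} (\<lambda>x. \<Sum>j\<in>{- int n..int n}. c j * trig_exp (j - k) x)"
    unfolding fourier_coeff_eq trig_poly_def
    by (simp add: sum_distrib_right mult.assoc trig_exp_add)
  also have "\<dots> = (\<Sum>j\<in>{- int n..int n}. c j * integral {0..1} (trig_exp (j - k)))"
    by (subst integral_sum) (auto intro!: integrable_continuous_01 continuous_intros)
  also have "\<dots> = (if k \<in> {- int n..int n} then c k else 0)"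
    by (simp add: integral_trig_exp if_distrib sum.delta' cong: if_cong)
  finally show ?thesis .
qed

lemma fourier_coeff_diff:
  assumes "continuous_on UNIV f" "continuous_on UNIV g"
  shows "fourier_coeff (\<lambda>x. f x - g x) k = fourier_coeff f k - fourier_coeff g k"
  unfolding fourier_coeff_eq left_diff_distrib
  by (intro integral_diff integrable_continuous_01 continuous_intros assms)

lemma integral_mult_cnj_trig_poly:
  assumes "continuous_on UNIV u"
  shows "integral {0..1} (\<lambda>x. u x * cnj (trig_poly n c x))
       = (\<Sum>k\<in>{- int n..int n}. cnj (c k) * fourier_coeff u k)"
proof -
  have "integral {0..1} (\<lambda>x. u x * cnj (trig_poly n c x))
      = integral {0..1} (\<lambda>x. \<Sum>k\<in>{- int n..int n}. cnj (c k) * (u x * trig_exp (- k) x))"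
    unfolding trig_poly_def by (simp add: cnj_sum sum_distrib_left cnj_trig_exp ac_simps)
  also have "\<dots> = (\<Sum>k\<in>{- int n..int n}. cnj (c k) * fourier_coeff u k)"
    unfolding fourier_coeff_eq
    by (subst integral_sum) (auto intro!: integrable_continuous_01 continuous_intros assms)
  finally show ?thesis .
qed

lemma integrable_norm_sq:
  fixes u :: "real \<Rightarrow> complex"
  shows "continuous_on UNIV u \<Longrightarrow> (\<lambda>x. (norm (u x))\<^sup>2) integrable_on {0..1}"
  by (intro integrable_continuous_01 continuous_intros)

lemma L2norm_sq:
  assumes "continuous_on UNIV u"
  shows "(L2norm u)\<^sup>2 = integral {0..1} (\<lambda>x. (norm (u x))\<^sup>2)"
  unfolding L2norm_def
  by (rule real_sqrt_pow2, rule integral_nonneg[OF integrable_norm_sq[OF assms]]) simp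

lemma L2norm_nonneg: "0 \<le> L2norm u"
proof (cases "(\<lambda>x. (norm (u x))\<^sup>2) integrable_on {0..1}")
  case True
  then show ?thesis unfolding L2norm_def by (simp add: integral_nonneg)
qed (simp add: L2norm_def not_integrable_integral)

lemma integral_norm_sq_le:
  fixes u :: "real \<Rightarrow> complex"
  assumes "continuous_on UNIV u" "\<And>x. norm (u x) \<le> E"
  shows "integral {0..1} (\<lambda>x. (norm (u x))\<^sup>2) \<le> E\<^sup>2"
proof -
  have "integral {0..1} (\<lambda>x. (norm (u x))\<^sup>2) \<le> integral {0..1} (\<lambda>x::real. E\<^sup>2)"
  proof (rule Henstock_Kurzweil_Integration.integral_le)
    show "(\<lambda>x. (norm (u x))\<^sup>2) integrable_on {0..1}" by (rule integrable_norm_sq[OF assms(1)])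
    show "(norm (u x))\<^sup>2 \<le> E\<^sup>2" for x by (rule power_mono[OF assms(2)]) simp
  qed (rule integrable_continuous_interval[OF continuous_on_const])
  then show ?thesis by simp
qed

lemma integral_norm_sq_add_orthogonal:
  fixes u d :: "real \<Rightarrow> complex"
  assumes "continuous_on UNIV u" "continuous_on UNIV d"
    and orth: "integral {0..1} (\<lambda>x. u x * cnj (d x)) = 0"
  shows "integral {0..1} (\<lambda>x. (norm (u x + d x))\<^sup>2) =
         integral {0..1} (\<lambda>x. (norm (u x))\<^sup>2) + integral {0..1} (\<lambda>x. (norm (d x))\<^sup>2)"
proof -
  have expand: "(norm (u x + d x))\<^sup>2 = (norm (u x))\<^sup>2 + (norm (d x))\<^sup>2 + 2 * Re (u x * cnj (d x))" for x
    by (simp only: cmod_power2) (simp add: algebra_simps power2_eq_square)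
  have "((\<lambda>x. u x * cnj (d x)) has_integral 0) {0..1}"
    using orth integrable_integral[OF integrable_continuous_01] assms
    by (metis continuous_on_cnj continuous_on_mult)
  from has_integral_mult_right[OF has_integral_Re[OF this], of 2]
  have "((\<lambda>x. 2 * Re (u x * cnj (d x))) has_integral 0) {0..1}"
    by simp
  then have "((\<lambda>x. (norm (u x))\<^sup>2 + (norm (d x))\<^sup>2 + 2 * Re (u x * cnj (d x))) has_integral
      integral {0..1} (\<lambda>x. (norm (u x))\<^sup>2) + integral {0..1} (\<lambda>x. (norm (d x))\<^sup>2) + 0) {0..1}"
    by (intro has_integral_add integrable_integral integrable_norm_sq assms)
  then show ?thesis unfolding expand by (simp add: integral_unique)
qed

section \<open>Uniqueness and pointwise convergence of Fourier series\<close>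

inductive trig_sum :: "(real \<Rightarrow> complex) \<Rightarrow> bool" where
  trig_sum_monom: "trig_sum (\<lambda>x. c * trig_exp k x)"
| trig_sum_add: "trig_sum F \<Longrightarrow> trig_sum G \<Longrightarrow> trig_sum (\<lambda>x. F x + G x)"

lemma trig_sum_const: "trig_sum (\<lambda>x. c)"
  using trig_sum_monom[of c 0] by simp

lemma trig_sum_mult_monom:
  assumes "trig_sum G"
  shows "trig_sum (\<lambda>x. c * trig_exp k x * G x)"
  using assms
proof (induction rule: trig_sum.induct)
  case (trig_sum_monom d j)
  have "(\<lambda>x. c * trig_exp k x * (d * trig_exp j x)) = (\<lambda>x. (c * d) * trig_exp (k + j) x)"
    by (simp add: trig_exp_add[symmetric] ac_simps)
  then show ?case by (simp add: trig_sum.trig_sum_monom)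
next
  case (trig_sum_add F G)
  then show ?case by (simp add: distrib_left trig_sum.trig_sum_add)
qed

lemma trig_sum_mult: "trig_sum F \<Longrightarrow> trig_sum G \<Longrightarrow> trig_sum (\<lambda>x. F x * G x)"
  by (induction rule: trig_sum.induct)
    (simp_all add: trig_sum_mult_monom distrib_right trig_sum.trig_sum_add)

lemma continuous_on_trig_sum: "trig_sum F \<Longrightarrow> continuous_on S F"
  by (induction rule: trig_sum.induct) (auto intro!: continuous_intros)

lemma trig_sum_real_polynomial:
  assumes "real_polynomial_function P"
  shows "trig_sum (\<lambda>x. of_real (P (trig_exp 1 x)))"
  using assms
proof (induction P rule: real_polynomial_function.induct)
  case (linear P)
  have decomp: "of_real (P z) = of_real (Re z) * of_real (P 1) + of_real (Im z) * of_real (P \<i>)" for z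
  proof -
    have "Re z *\<^sub>R 1 + Im z *\<^sub>R \<i> = z" by (simp add: complex_eq_iff)
    then have "P z = P (Re z *\<^sub>R 1 + Im z *\<^sub>R \<i>)" by simp
    then show ?thesis
      using bounded_linear.linear[OF linear] by (simp add: linear_add linear_scale)
  qed
  have "of_real (P (trig_exp 1 x)) =
     (of_real (P 1) / 2 + of_real (P \<i>) / (2 * \<i>)) * trig_exp 1 x
        + (of_real (P 1) / 2 - of_real (P \<i>) / (2 * \<i>)) * trig_exp (- 1) x" for x
  proof -
    let ?w = "trig_exp 1 x"
    have re: "of_real (Re ?w) = (?w + trig_exp (- 1) x) / 2"
      using complex_add_cnj[of ?w] by (simp add: cnj_trig_exp)
    have im: "of_real (Im ?w) = (?w - trig_exp (- 1) x) / (2 * \<i>)"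
      using complex_diff_cnj[of ?w] by (simp add: cnj_trig_exp field_simps)
    show ?thesis
      unfolding decomp[of ?w] re im by (simp add: field_simps)
  qed
  then show ?case by (simp add: trig_sum.intros)
qed (simp_all add: trig_sum_const trig_sum_add trig_sum_mult)

lemma trig_sum_polynomial:
  assumes "polynomial_function G"
  shows "trig_sum (\<lambda>x. G (trig_exp 1 x))"
proof -
  have "real_polynomial_function (Re \<circ> G)" "real_polynomial_function (Im \<circ> G)"
    using assms unfolding polynomial_function_def by (auto intro: bounded_linear_Re bounded_linear_Im)
  then have "trig_sum (\<lambda>x. of_real (Re (G (trig_exp 1 x))) + \<i> * of_real (Im (G (trig_exp 1 x))))"
    using trig_sum_real_polynomial trig_sum_add trig_sum_mult[OF trig_sum_const] by force
  then show ?thesis by (simp add: complex_eq[symmetric])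
qed

lemma integral_mult_trig_sum_eq_0:
  assumes "trig_sum G" "continuous_on UNIV h" "\<And>k. fourier_coeff h k = 0"
  shows "integral {0..1} (\<lambda>x. h x * G x) = 0"
  using assms(1)
proof (induction rule: trig_sum.induct)
  case (trig_sum_monom c k)
  then show ?case
    using assms(3)[of "- k"] by (simp add: fourier_coeff_eq mult.left_commute)
next
  case (trig_sum_add F G)
  then show ?case
    by (simp add: distrib_left integral_add integrable_continuous_01 continuous_on_trig_sum
        continuous_on_mult assms(2))
qed

lemma Arg2pi_eq_Arg: "Arg2pi z = (if Arg z < 0 then Arg z + 2 * pi else Arg z)"
proof (cases "z = 0")
  case False
  have "exp (\<i> * of_real (Arg z + 2 * pi)) = exp (\<i> * of_real (Arg z))"
    using exp_two_pi_i by (simp add: distrib_left exp_add mult.commute)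
  then have "of_real (norm z) * exp (\<i> * of_real (if Arg z < 0 then Arg z + 2 * pi else Arg z)) = z"
    using Arg_eq[OF False] by simp
  then show ?thesis
    by (rule Arg2pi_unique) (use False mpi_less_Arg[of z] Arg_le_pi[of z] in auto)
qed (simp add: Arg_def)

lemma periodic_lift_to_circle:
  fixes h :: "real \<Rightarrow> 'a::topological_space"
  assumes hc: "continuous_on UNIV h" and per: "\<And>x. h (x + 1) = h x"
  obtains H where "continuous_on (sphere 0 1) H" "\<And>x. H (trig_exp 1 x) = h x"
proof
  define H where "H z = h (Arg2pi z / (2 * pi))" for z
  \<comment> \<open>\<open>Arg2pi\<close> jumps on the positive and \<open>Arg\<close> on the negative real axis; by periodicity of \<open>h\<close>
    both describe \<open>H\<close>, which is therefore continuous everywhere on the circle\<close>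
  have H_Arg: "H = (\<lambda>z. h (Arg z / (2 * pi)))"
  proof
    fix z
    have "Arg2pi z / (2 * pi) = Arg z / (2 * pi) + (if Arg z < 0 then 1 else 0)"
      by (simp add: Arg2pi_eq_Arg field_simps)
    then show "H z = h (Arg z / (2 * pi))" by (simp add: H_def per)
  qed
  have h_cont: "isCont h y" for y
    using hc by (simp add: continuous_on_eq_continuous_at)
  have "isCont H z" if "z \<in> sphere 0 1" for z
  proof (cases "z \<in> \<real>\<^sub>\<ge>\<^sub>0")
    case True
    then have "z \<notin> \<real>\<^sub>\<le>\<^sub>0"
      using that by (auto simp: nonneg_Reals_def nonpos_Reals_def complex_eq_iff cmod_def)
    from continuous_at_Arg[OF this] show ?thesis
      unfolding H_Arg by (intro continuous_intros isCont_o2[where g = h, OF _ h_cont]) auto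
  next
    case False
    from continuous_at_Arg2pi[OF this] show ?thesis
      unfolding H_def by (intro continuous_intros isCont_o2[where g = h, OF _ h_cont]) auto
  qed
  then show "continuous_on (sphere 0 1) H"
    by (simp add: continuous_at_imp_continuous_on)
  fix x
  have "trig_exp 1 x = trig_exp 1 (frac x)"
    using periodic_int[of "trig_exp 1" "frac x" "\<lfloor>x\<rfloor>"] by (simp add: frac_def)
  also have "\<dots> = exp (of_real (2 * pi * frac x) * \<i>)"
    by (simp add: trig_exp_def mult_ac)
  finally have "trig_exp 1 x = exp (of_real (2 * pi * frac x) * \<i>)" .
  moreover have "Arg2pi (exp (of_real (2 * pi * frac x) * \<i>)) = 2 * pi * frac x"
    by (subst Arg2pi_exp) (auto simp: frac_lt_1)
  ultimately have "H (trig_exp 1 x) = h (frac x)" by (simp add: H_def)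
  also have "\<dots> = h x"
    using periodic_int[of h "frac x" "\<lfloor>x\<rfloor>", OF per] by (simp add: frac_def)
  finally show "H (trig_exp 1 x) = h x" .
qed

lemma integral_norm_sq_eq_0_imp_eq_0:
  fixes h :: "real \<Rightarrow> complex"
  assumes hc: "continuous_on UNIV h" and per: "\<And>x. h (x + 1) = h x"
    and zero: "integral {0..1} (\<lambda>x. (norm (h x))\<^sup>2) = 0"
  shows "h x = 0"
proof -
  have "((\<lambda>x. (norm (h x))\<^sup>2) has_integral 0) (cbox 0 1)"
    using integrable_integral[OF integrable_norm_sq[OF hc]] zero by simp
  then have "(norm (h y))\<^sup>2 = 0" if "y \<in> {0..1}" for y
    by (intro has_integral_0_cbox_imp_0[where f = "\<lambda>x. (norm (h x))\<^sup>2"])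
      (use that in \<open>auto intro!: continuous_intros continuous_on_subset[OF hc]\<close>)
  then have "h (frac x) = 0"
    by (simp add: frac_lt_1 less_imp_le)
  then show ?thesis
    using periodic_int[of h "frac x" "\<lfloor>x\<rfloor>", OF per] by (simp add: frac_def)
qed

theorem fourier_coeff_eq_0_imp_eq_0:
  fixes h :: "real \<Rightarrow> complex"
  assumes hc: "continuous_on UNIV h" and per: "\<And>x. h (x + 1) = h x"
    and zero: "\<And>k. fourier_coeff h k = 0"
  shows "h x = 0"
proof (rule integral_norm_sq_eq_0_imp_eq_0[OF hc per])
  obtain H where Hc: "continuous_on (sphere 0 1) H" and H: "\<And>x. H (trig_exp 1 x) = cnj (h x)"
    using periodic_lift_to_circle[of "\<lambda>x. cnj (h x)"] hc per by (metis continuous_on_cnj)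
  obtain M where M: "M > 0" "\<And>x. x \<in> {0..1} \<Longrightarrow> norm (h x) \<le> M"
    using compact_imp_bounded[OF compact_continuous_image[OF continuous_on_subset[OF hc]]]
    by (metis bounded_pos compact_Icc image_eqI subset_UNIV)
  define I where "I = integral {0..1} (\<lambda>x. (norm (h x))\<^sup>2)"
  \<comment> \<open>\<open>I\<close> is the integral of \<open>h\<close> times \<open>cnj h\<close>, which is uniformly close to a polynomial in \<open>trig_exp 1\<close>,
    and \<open>h\<close> is orthogonal to all such polynomials\<close>
  have "I \<le> e" if e: "e > 0" for e
  proof -
    obtain G where G: "polynomial_function G" "\<And>z. z \<in> sphere 0 1 \<Longrightarrow> norm (H z - G z) < e / M"
      using Stone_Weierstrass_polynomial_function[OF compact_sphere Hc, of "e / M"] e M(1) by auto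
    define R where "R x = cnj (h x) - G (trig_exp 1 x)" for x
    have TG: "trig_sum (\<lambda>x. G (trig_exp 1 x))" by (rule trig_sum_polynomial[OF G(1)])
    have cont: "continuous_on UNIV (\<lambda>x. h x * R x)" "continuous_on UNIV (\<lambda>x. h x * G (trig_exp 1 x))"
      unfolding R_def by (intro continuous_intros hc continuous_on_trig_sum[OF TG])+
    have "of_real ((norm (h x))\<^sup>2) = h x * R x + h x * G (trig_exp 1 x)" for x
      unfolding R_def complex_norm_square by (simp add: algebra_simps)
    moreover have "integral {0..1} (\<lambda>x. of_real ((norm (h x))\<^sup>2)) = (of_real I :: complex)"
      unfolding I_def
      by (rule integral_unique[OF has_integral_of_real[OF integrable_integral[OF integrable_norm_sq[OF hc]]]])
    ultimately have "of_real I = integral {0..1} (\<lambda>x. h x * R x)"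
      using integral_mult_trig_sum_eq_0[OF TG hc zero] integral_add[OF cont[THEN integrable_continuous_01]]
      by simp
    also have "norm \<dots> \<le> integral {0..1} (\<lambda>x::real. M * (e / M))"
    proof (rule integral_norm_bound_integral)
      show "(\<lambda>x. h x * R x) integrable_on {0..1}" by (rule integrable_continuous_01[OF cont(1)])
      show "norm (h x * R x) \<le> M * (e / M)" if "x \<in> {0..1}" for x
        unfolding norm_mult R_def using M that G(2)[of "trig_exp 1 x"] H[of x]
        by (intro mult_mono) (auto simp: norm_minus_commute less_imp_le)
    qed (rule integrable_continuous_interval[OF continuous_on_const])
    finally show "I \<le> e" using M(1) by simp
  qed
  then have "I \<le> 0" by (metis field_le_epsilon add_0)
  moreover have "0 \<le> I"
    unfolding I_def by (rule integral_nonneg[OF integrable_norm_sq[OF hc]]) simp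
  ultimately show "integral {0..1} (\<lambda>x. (norm (h x))\<^sup>2) = 0" by (simp add: I_def)
qed

lemma fourier_coeff_trig_series:
  fixes c :: "int \<Rightarrow> complex"
  assumes summable: "(\<lambda>k. norm (c k)) summable_on UNIV"
  shows "fourier_coeff (\<lambda>x. \<Sum>\<^sub>\<infinity>k. c k * trig_exp k x) j = c j"
proof -
  define F where "F K x = (\<Sum>k\<in>K. c k * trig_exp (k - j) x)" for K x
  have "uniform_limit {0..1} F (\<lambda>x. \<Sum>\<^sub>\<infinity>k. c k * trig_exp (k - j) x) (finite_subsets_at_top UNIV)"
    unfolding F_def
    by (rule Weierstrass_m_test_general[OF _ summable]) (simp add: norm_mult)
  then obtain I J where I: "\<And>K. (F K has_integral I K) {0..1}"
    and J: "((\<lambda>x. \<Sum>\<^sub>\<infinity>k. c k * trig_exp (k - j) x) has_integral J) {0..1}"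
    and lim: "(I \<longlongrightarrow> J) (finite_subsets_at_top UNIV)"
    by (rule uniform_limit_integral) (auto simp: F_def intro!: continuous_intros)
  have "I K = c j" if "finite K" "j \<in> K" for K
  proof -
    have "(F K has_integral (\<Sum>k\<in>K. c k * (if k - j = 0 then 1 else 0))) {0..1}"
      unfolding F_def using that(1) by (intro has_integral_sum has_integral_mult_right has_integral_trig_exp)
    then show ?thesis
      using I[of K] that by (simp add: has_integral_unique sum.delta' if_distrib cong: if_cong)
  qed
  then have "\<forall>\<^sub>F K in finite_subsets_at_top UNIV. I K = c j"
    by (auto intro: eventually_finite_subsets_at_top_weakI[of "{j}"] simp: eventually_finite_subsets_at_top)
  with lim have "J = c j"
    using tendsto_unique[OF _ lim tendsto_eventually] by force
  moreover have "(\<Sum>\<^sub>\<infinity>k. c k * trig_exp k x) * trig_exp (- j) x = (\<Sum>\<^sub>\<infinity>k. c k * trig_exp (k - j) x)" for x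
    by (simp add: infsum_cmult_left'[symmetric] mult.assoc trig_exp_add)
  ultimately show ?thesis
    using J by (simp add: fourier_coeff_eq integral_unique)
qed

lemma continuous_on_trig_series:
  fixes c :: "int \<Rightarrow> complex"
  assumes "(\<lambda>k. norm (c k)) summable_on UNIV"
  shows "continuous_on UNIV (\<lambda>x. \<Sum>\<^sub>\<infinity>k. c k * trig_exp k x)"
proof (rule uniform_limit_theorem)
  show "uniform_limit UNIV (\<lambda>K x. \<Sum>k\<in>K. c k * trig_exp k x) (\<lambda>x. \<Sum>\<^sub>\<infinity>k. c k * trig_exp k x)
      (finite_subsets_at_top UNIV)"
    by (rule Weierstrass_m_test_general[OF _ assms]) (simp add: norm_mult)
qed (auto intro!: always_eventually continuous_intros)

theorem fourier_series_eq:
  fixes h :: "real \<Rightarrow> complex"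
  assumes hc: "continuous_on UNIV h" and per: "\<And>x. h (x + 1) = h x"
    and summable: "(\<lambda>k. norm (fourier_coeff h k)) summable_on UNIV"
  shows "h x = (\<Sum>\<^sub>\<infinity>k. fourier_coeff h k * trig_exp k x)"
proof -
  define g where "g = (\<lambda>x. \<Sum>\<^sub>\<infinity>k. fourier_coeff h k * trig_exp k x)"
  have gc: "continuous_on UNIV g"
    unfolding g_def by (rule continuous_on_trig_series[OF summable])
  have "h x - g x = 0"
  proof (rule fourier_coeff_eq_0_imp_eq_0[where h = "\<lambda>x. h x - g x"])
    show "continuous_on UNIV (\<lambda>x. h x - g x)" by (intro continuous_intros hc gc)
    show "h (x + 1) - g (x + 1) = h x - g x" for x by (simp add: per g_def)
    show "fourier_coeff (\<lambda>x. h x - g x) k = 0" for k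
      using fourier_coeff_diff[OF hc gc, of k] fourier_coeff_trig_series[OF summable, of k]
      by (simp add: g_def)
  qed
  then show ?thesis by (simp add: g_def)
qed

corollary norm_le_fourier_coeff_sums:
  fixes h :: "real \<Rightarrow> complex"
  assumes hc: "continuous_on UNIV h" and per: "\<And>x. h (x + 1) = h x"
    and bound: "\<And>K. finite K \<Longrightarrow> (\<Sum>k\<in>K. norm (fourier_coeff h k)) \<le> M"
  shows "norm (h x) \<le> M"
proof -
  have summable: "(\<lambda>k. norm (fourier_coeff h k)) summable_on UNIV"
    using bound by (intro nonneg_bdd_above_summable_on bdd_aboveI) auto
  have "norm (h x) \<le> (\<Sum>\<^sub>\<infinity>k. norm (fourier_coeff h k * trig_exp k x))"
    unfolding fourier_series_eq[OF hc per summable, of x]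
    by (rule norm_infsum_bound) (simp add: norm_mult summable)
  also have "\<dots> \<le> M"
    using bound summable by (simp add: norm_mult infsum_le_finite_sums)
  finally show ?thesis .
qed

section \<open>Weighted least squares\<close>

lemma weighted_sum_le_if_segment_minimal:
  fixes a b :: "'i \<Rightarrow> complex" and w :: "'i \<Rightarrow> real"
  assumes w: "\<And>k. k \<in> I \<Longrightarrow> 0 \<le> w k"
    and min: "\<And>t::real. (\<Sum>k\<in>I. (norm (a k - b k))\<^sup>2 * w k) \<le> (\<Sum>k\<in>I. (norm (a k - t * b k))\<^sup>2 * w k)"
  shows "(\<Sum>k\<in>I. (norm (b k))\<^sup>2 * w k) \<le> (\<Sum>k\<in>I. (norm (a k))\<^sup>2 * w k)"
proof -
  define N where "N = (\<Sum>k\<in>I. (norm (b k))\<^sup>2 * w k)"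
  define P where "P = (\<Sum>k\<in>I. (norm (a k))\<^sup>2 * w k)"
  define R where "R = (\<Sum>k\<in>I. Re (a k * cnj (b k)) * w k)"
  have quadratic: "(\<Sum>k\<in>I. (norm (a k - t * b k))\<^sup>2 * w k) = P - 2 * t * R + t\<^sup>2 * N" for t :: real
  proof -
    have "(norm (a k - t * b k))\<^sup>2 * w k
        = (norm (a k))\<^sup>2 * w k - 2 * t * (Re (a k * cnj (b k)) * w k) + t\<^sup>2 * ((norm (b k))\<^sup>2 * w k)" for k
      by (simp only: cmod_power2) (simp add: algebra_simps power2_eq_square)
    then show ?thesis
      by (simp add: N_def P_def R_def sum.distrib sum_subtractf sum_distrib_left)
  qed
  have N: "0 \<le> N" and P: "0 \<le> P"
    unfolding N_def P_def by (auto intro!: sum_nonneg mult_nonneg_nonneg w)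
  have at_1_eq: "(\<Sum>k\<in>I. (norm (a k - b k))\<^sup>2 * w k) = P - 2 * R + N"
    using quadratic[of 1] by simp
  have at_1: "0 \<le> P - 2 * R + N"
    unfolding at_1_eq[symmetric] using w by (auto intro!: sum_nonneg)
  show ?thesis
  proof (cases "N = 0")
    case False
    \<comment> \<open>comparing the value at \<open>t = 1\<close> with the minimum at \<open>t = R / N\<close> forces \<open>R = N\<close>\<close>
    have "P - 2 * R + N \<le> P - 2 * (R / N) * R + (R / N)\<^sup>2 * N"
      using min[of "R / N"] unfolding quadratic at_1_eq .
    also have "\<dots> = P - R\<^sup>2 / N"
      using False by (simp add: field_simps power2_eq_square)
    finally have "N * (N - 2 * R) \<le> N * (- R\<^sup>2 / N)"
      using N by (intro mult_left_mono) auto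
    then have "(N - R)\<^sup>2 \<le> 0"
      using False by (simp add: power2_eq_square algebra_simps)
    then have "R = N" by simp
    then show ?thesis using at_1 by (simp add: N_def P_def)
  qed (use P in \<open>simp add: N_def P_def\<close>)
qed

lemma ls_solution_samples_le:
  assumes ls: "ls_solution L X \<tau> f n p" and q: "q \<in> trig_polys n"
    and \<tau>: "\<And>k. k \<in> {1..L n} \<Longrightarrow> 0 \<le> \<tau> n k"
  shows "(\<Sum>k=1..L n. (norm (p (X n k) - q (X n k)))\<^sup>2 * \<tau> n k)
       \<le> (\<Sum>k=1..L n. (norm (f (X n k) - q (X n k)))\<^sup>2 * \<tau> n k)"
proof (rule weighted_sum_le_if_segment_minimal[OF \<tau>])
  fix t :: real
  have p: "p \<in> trig_polys n" using ls by (simp add: ls_solution_def)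
  have "(\<lambda>x. q x + of_real t * (p x - q x)) \<in> trig_polys n"
    by (intro trig_polys_add_scaled trig_polys_diff p q)
  from bspec[OF conjunct2[OF ls[unfolded ls_solution_def]] this]
  have "(\<Sum>k=1..L n. (norm (f (X n k) - p (X n k)))\<^sup>2 * \<tau> n k)
      \<le> (\<Sum>k=1..L n. (norm (f (X n k) - (q (X n k) + of_real t * (p (X n k) - q (X n k)))))\<^sup>2 * \<tau> n k)"
    by simp
  then show "(\<Sum>k=1..L n. (norm ((f (X n k) - q (X n k)) - (p (X n k) - q (X n k))))\<^sup>2 * \<tau> n k)
      \<le> (\<Sum>k=1..L n. (norm ((f (X n k) - q (X n k)) - of_real t * (p (X n k) - q (X n k))))\<^sup>2 * \<tau> n k)"
    by (simp add: algebra_simps)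
qed

lemma MZ_familyD:
  assumes "MZ_family L X \<tau> A B" "n \<ge> 1"
  shows "0 < A" "\<And>k. k \<in> {1..L n} \<Longrightarrow> 0 < \<tau> n k"
    and "\<And>p. p \<in> trig_polys n \<Longrightarrow> A * (L2norm p)\<^sup>2 \<le> (\<Sum>k=1..L n. (norm (p (X n k)))\<^sup>2 * \<tau> n k)"
    and "\<And>p. p \<in> trig_polys n \<Longrightarrow> (\<Sum>k=1..L n. (norm (p (X n k)))\<^sup>2 * \<tau> n k) \<le> B * (L2norm p)\<^sup>2"
  using assms unfolding MZ_family_def by auto

lemma MZ_family_sum_weights_le:
  assumes "MZ_family L X \<tau> A B" "n \<ge> 1"
  shows "(\<Sum>k=1..L n. \<tau> n k) \<le> B"
proof -
  have "(L2norm (\<lambda>x. 1))\<^sup>2 = 1" by (subst L2norm_sq) auto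
  then show ?thesis
    using MZ_familyD(4)[OF assms const_in_trig_polys[of 1]] by simp
qed

lemma MZ_ls_distance_le:
  assumes MZ: "MZ_family L X \<tau> A B" and n: "n \<ge> 1" and ls: "ls_solution L X \<tau> f n p"
    and q: "q \<in> trig_polys n" and E: "\<And>k. k \<in> {1..L n} \<Longrightarrow> norm (f (X n k) - q (X n k)) \<le> E"
  shows "A * (L2norm (\<lambda>x. q x - p x))\<^sup>2 \<le> E\<^sup>2 * B"
proof -
  note \<tau> = MZ_familyD(2)[OF MZ n]
  have "(\<lambda>x. q x - p x) \<in> trig_polys n"
    using ls q by (intro trig_polys_diff) (auto simp: ls_solution_def)
  from MZ_familyD(3)[OF MZ n this]
  have "A * (L2norm (\<lambda>x. q x - p x))\<^sup>2 \<le> (\<Sum>k=1..L n. (norm (p (X n k) - q (X n k)))\<^sup>2 * \<tau> n k)"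
    by (simp add: norm_minus_commute)
  also have "\<dots> \<le> (\<Sum>k=1..L n. (norm (f (X n k) - q (X n k)))\<^sup>2 * \<tau> n k)"
    using ls_solution_samples_le[OF ls q less_imp_le[OF \<tau>]] .
  also have "\<dots> \<le> (\<Sum>k=1..L n. E\<^sup>2 * \<tau> n k)"
    using E \<tau> by (intro sum_mono mult_right_mono power_mono) (auto simp: less_imp_le)
  also have "\<dots> \<le> E\<^sup>2 * B"
    using MZ_family_sum_weights_le[OF MZ n] by (simp add: sum_distrib_left[symmetric] mult_left_mono)
  finally show ?thesis .
qed

lemma ls_error_le_sup_error:
  assumes MZ: "MZ_family L X \<tau> A B" and AB: "A \<le> B" and f_cont: "cont_on_torus f"
    and n: "n \<ge> 1" and ls: "ls_solution L X \<tau> f n p"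
    and E: "\<And>x. norm (f x - trig_poly n (fourier_coeff f) x) \<le> E"
  shows "L2norm (\<lambda>x. f x - p x) \<le> sqrt (1 + (B / A)\<^sup>2) * E"
proof -
  note A = MZ_familyD(1)[OF MZ n]
  have fc: "continuous_on UNIV f" using f_cont by (simp add: cont_on_torus_def)
  define q where "q = trig_poly n (fourier_coeff f)"
  define u where "u = (\<lambda>x. f x - q x)"
  define d where "d = (\<lambda>x. q x - p x)"
  have "d \<in> trig_polys n"
    using ls unfolding d_def q_def ls_solution_def by (intro trig_polys_diff) auto
  then obtain c where dc: "d = trig_poly n c" by (auto simp: trig_polys_iff)
  have uc: "continuous_on UNIV u" and dc': "continuous_on UNIV d"
    unfolding u_def q_def dc by (intro continuous_intros fc)+
  have "fourier_coeff u k = 0" if "k \<in> {- int n..int n}" for k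
    using that unfolding u_def q_def by (simp add: fourier_coeff_diff[OF fc] continuous_intros fourier_coeff_trig_poly)
  then have orth: "integral {0..1} (\<lambda>x. u x * cnj (d x)) = 0"
    unfolding dc integral_mult_cnj_trig_poly[OF uc] by simp
  have u_le: "integral {0..1} (\<lambda>x. (norm (u x))\<^sup>2) \<le> E\<^sup>2"
    by (rule integral_norm_sq_le[OF uc]) (simp add: u_def q_def E)
  have "A * (L2norm d)\<^sup>2 \<le> E\<^sup>2 * B"
    unfolding d_def by (rule MZ_ls_distance_le[OF MZ n ls]) (simp_all add: q_def E)
  then have "A * integral {0..1} (\<lambda>x. (norm (d x))\<^sup>2) \<le> E\<^sup>2 * B"
    by (simp add: L2norm_sq[OF dc'])
  then have "integral {0..1} (\<lambda>x. (norm (d x))\<^sup>2) \<le> E\<^sup>2 * (B / A)"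
    using A by (simp add: field_simps)
  also have "\<dots> \<le> E\<^sup>2 * (B / A)\<^sup>2"
  proof (intro mult_left_mono)
    have "1 \<le> B / A" using A AB by simp
    then have "B / A * 1 \<le> B / A * (B / A)" by (intro mult_left_mono) auto
    then show "B / A \<le> (B / A)\<^sup>2" by (simp add: power2_eq_square)
  qed simp
  finally have d_le: "integral {0..1} (\<lambda>x. (norm (d x))\<^sup>2) \<le> E\<^sup>2 * (B / A)\<^sup>2" .
  have "(L2norm (\<lambda>x. f x - p x))\<^sup>2 = integral {0..1} (\<lambda>x. (norm (u x + d x))\<^sup>2)"
    using fc ls by (subst L2norm_sq)
      (auto simp: u_def d_def ls_solution_def intro!: continuous_intros intro: continuous_on_trig_polys)
  also have "\<dots> \<le> (sqrt (1 + (B / A)\<^sup>2) * E)\<^sup>2"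
    unfolding integral_norm_sq_add_orthogonal[OF uc dc' orth]
    using u_le d_le by (simp add: power_mult_distrib algebra_simps)
  finally have "(L2norm (\<lambda>x. f x - p x))\<^sup>2 \<le> (sqrt (1 + (B / A)\<^sup>2) * E)\<^sup>2" .
  moreover have "0 \<le> E" using E[of 0] norm_ge_zero order_trans by blast
  then have "0 \<le> sqrt (1 + (B / A)\<^sup>2) * E" by simp
  ultimately show ?thesis by (rule power2_le_imp_le)
qed

lemma ls_error_le_fourier_tail:
  assumes MZ: "MZ_family L X \<tau> A B" and AB: "A \<le> B" and f_cont: "cont_on_torus f"
    and n: "n \<ge> 1" and ls: "ls_solution L X \<tau> f n p"
    and tail: "\<And>K. finite K \<Longrightarrow> K \<inter> {- int n..int n} = {} \<Longrightarrow> (\<Sum>k\<in>K. norm (fourier_coeff f k)) \<le> E"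
  shows "L2norm (\<lambda>x. f x - p x) \<le> sqrt (1 + (B / A)\<^sup>2) * E"
proof (rule ls_error_le_sup_error[OF MZ AB f_cont n ls])
  fix x
  have fc: "continuous_on UNIV f" and per: "\<And>x. f (x + 1) = f x"
    using f_cont by (auto simp: cont_on_torus_def)
  define h where "h y = f y - trig_poly n (fourier_coeff f) y" for y
  have hc: "continuous_on UNIV h" unfolding h_def by (intro continuous_intros fc)
  have "(\<Sum>k\<in>K. norm (fourier_coeff h k)) \<le> E" if "finite K" for K
  proof -
    have "(\<Sum>k\<in>K. norm (fourier_coeff h k)) = (\<Sum>k\<in>K - {- int n..int n}. norm (fourier_coeff f k))"
      using that unfolding h_def
      by (intro sum.mono_neutral_cong_right)
        (auto simp: fourier_coeff_diff[OF fc] continuous_intros fourier_coeff_trig_poly)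
    also have "\<dots> \<le> E" using that by (intro tail) auto
    finally show ?thesis .
  qed
  then show "norm (f x - trig_poly n (fourier_coeff f) x) \<le> E"
    using norm_le_fourier_coeff_sums[OF hc] per unfolding h_def by simp
qed

section \<open>Tail sums of Fourier coefficients\<close>

lemma sum_int_complement_eq:
  fixes \<phi> :: "nat \<Rightarrow> real"
  shows "(\<Sum>k\<in>{- int N..int N} - {- int n..int n}. \<phi> (nat \<bar>k\<bar>)) = 2 * (\<Sum>j\<in>{n<..N}. \<phi> j)"
proof -
  have split: "{- int N..int N} - {- int n..int n} = int ` {n<..N} \<union> (\<lambda>j. - int j) ` {n<..N}"
  proof (intro set_eqI iffI)
    fix k assume k: "k \<in> {- int N..int N} - {- int n..int n}"
    then have "nat \<bar>k\<bar> \<in> {n<..N}" by auto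
    moreover have "k = int (nat \<bar>k\<bar>) \<or> k = - int (nat \<bar>k\<bar>)" by linarith
    ultimately show "k \<in> int ` {n<..N} \<union> (\<lambda>j. - int j) ` {n<..N}" by blast
  qed auto
  have "(\<Sum>k\<in>{- int N..int N} - {- int n..int n}. \<phi> (nat \<bar>k\<bar>)) =
      (\<Sum>k\<in>int ` {n<..N}. \<phi> (nat \<bar>k\<bar>)) + (\<Sum>k\<in>(\<lambda>j. - int j) ` {n<..N}. \<phi> (nat \<bar>k\<bar>))"
    unfolding split by (rule sum.union_disjoint) auto
  also have "\<dots> = 2 * (\<Sum>j\<in>{n<..N}. \<phi> j)"
    by (simp add: sum.reindex inj_on_def)
  finally show ?thesis .
qed

lemma sum_abs_index_le:
  fixes \<phi> :: "nat \<Rightarrow> real"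
  assumes K: "finite K" "K \<inter> {- int n..int n} = {}"
    and nonneg: "\<And>j. 0 \<le> \<phi> j" and bound: "\<And>N. (\<Sum>j\<in>{n<..N}. \<phi> j) \<le> C"
  shows "(\<Sum>k\<in>K. \<phi> (nat \<bar>k\<bar>)) \<le> 2 * C"
proof -
  define N where "N = Max (insert 0 ((\<lambda>k. nat \<bar>k\<bar>) ` K))"
  have "K \<subseteq> {- int N..int N} - {- int n..int n}"
  proof
    fix k assume "k \<in> K"
    then have "nat \<bar>k\<bar> \<le> N" using K(1) by (simp add: N_def)
    then show "k \<in> {- int N..int N} - {- int n..int n}" using K(2) \<open>k \<in> K\<close> by auto
  qed
  then have "(\<Sum>k\<in>K. \<phi> (nat \<bar>k\<bar>)) \<le> (\<Sum>k\<in>{- int N..int N} - {- int n..int n}. \<phi> (nat \<bar>k\<bar>))"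
    by (intro sum_mono2 nonneg) auto
  also have "\<dots> \<le> 2 * C"
    unfolding sum_int_complement_eq using bound by simp
  finally show ?thesis .
qed

lemma powr_diff_ge:
  fixes s y :: real
  assumes "1 < s" "1 < y"
  shows "(s - 1) * y powr (- s) \<le> (y - 1) powr (1 - s) - y powr (1 - s)"
proof -
  have "\<exists>z. y - 1 < z \<and> z < y \<and>
      y powr (1 - s) - (y - 1) powr (1 - s) = (y - (y - 1)) * ((1 - s) * z powr (1 - s - 1))"
    by (rule MVT2) (simp, rule has_real_derivative_powr, use assms in linarith)
  then obtain z where z: "y - 1 < z" "z < y"
    and mvt: "y powr (1 - s) - (y - 1) powr (1 - s) = (1 - s) * z powr (- s)"
    by auto
  have "y powr (- s) \<le> z powr (- s)"
    using assms z by (intro powr_mono2') auto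
  then have "(s - 1) * y powr (- s) \<le> (s - 1) * z powr (- s)"
    using assms by (intro mult_left_mono) auto
  moreover have "(y - 1) powr (1 - s) - y powr (1 - s) = (s - 1) * z powr (- s)"
    using mvt by (simp add: algebra_simps)
  ultimately show ?thesis by simp
qed

lemma sum_powr_tail_le:
  fixes s :: real
  assumes s: "1 < s" and n: "n \<ge> 1"
  shows "(\<Sum>j\<in>{n<..N}. real j powr (- s)) \<le> real n powr (1 - s) / (s - 1)"
proof (cases "n \<le> N")
  case True
  have "(\<Sum>j\<in>{n<..N}. real j powr (- s)) \<le> (real n powr (1 - s) - real N powr (1 - s)) / (s - 1)"
    using True
  proof (induction N rule: dec_induct)
    case (step N)
    have "{n<..Suc N} = insert (Suc N) {n<..N}" using step.hyps by auto
    then have "(\<Sum>j\<in>{n<..Suc N}. real j powr (- s)) = real (Suc N) powr (- s) + (\<Sum>j\<in>{n<..N}. real j powr (- s))"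
      by simp
    also have "\<dots> \<le> (real N powr (1 - s) - real (Suc N) powr (1 - s)) / (s - 1)
        + (real n powr (1 - s) - real N powr (1 - s)) / (s - 1)"
    proof (rule add_mono[OF _ step.IH])
      show "real (Suc N) powr (- s) \<le> (real N powr (1 - s) - real (Suc N) powr (1 - s)) / (s - 1)"
        using powr_diff_ge[OF s, of "real (Suc N)"] step.hyps n s by (simp add: pos_le_divide_eq mult.commute)
    qed
    also have "\<dots> = (real n powr (1 - s) - real (Suc N) powr (1 - s)) / (s - 1)"
      by (simp add: diff_divide_distrib)
    finally show ?case .
  qed simp
  also have "\<dots> \<le> real n powr (1 - s) / (s - 1)"
    using s by (simp add: divide_right_mono)
  finally show ?thesis .
qed (use s in simp)

lemma sum_geometric_tail_le:
  fixes q :: real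
  assumes q: "0 \<le> q" "q < 1"
  shows "(\<Sum>j\<in>{n<..N}. q ^ j) \<le> q ^ Suc n / (1 - q)"
proof (cases "n \<le> N")
  case True
  have "(\<Sum>j\<in>{n<..N}. q ^ j) \<le> (q ^ Suc n - q ^ Suc N) / (1 - q)"
    using True
  proof (induction N rule: dec_induct)
    case (step N)
    have "{n<..Suc N} = insert (Suc N) {n<..N}" using step.hyps by auto
    then show ?case using step.IH q by (simp add: field_simps)
  qed simp
  also have "\<dots> \<le> q ^ Suc n / (1 - q)"
    using q by (simp add: divide_right_mono)
  finally show ?thesis .
qed (use q in simp)

lemma sum_geometric_coeff_le:
  fixes c :: "int \<Rightarrow> complex"
  assumes M: "M \<ge> 0" "\<And>k. norm (c k) \<le> M * q ^ nat \<bar>k\<bar>" and q: "0 \<le> q" "q < 1"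
    and K: "finite K" "K \<inter> {- int n..int n} = {}"
  shows "(\<Sum>k\<in>K. norm (c k)) \<le> 2 * (M * q ^ Suc n / (1 - q))"
proof -
  have "(\<Sum>k\<in>K. norm (c k)) \<le> (\<Sum>k\<in>K. M * q ^ nat \<bar>k\<bar>)"
    using M(2) by (rule sum_mono)
  also have "\<dots> \<le> 2 * (M * q ^ Suc n / (1 - q))"
  proof (rule sum_abs_index_le[OF K])
    show "(\<Sum>j\<in>{n<..N}. M * q ^ j) \<le> M * q ^ Suc n / (1 - q)" for N
      using mult_left_mono[OF sum_geometric_tail_le[OF q] M(1)] by (simp add: sum_distrib_left)
  qed (use M(1) q in simp)
  finally show ?thesis .
qed

lemma sum_inverse_Sobolev_weight_le:
  assumes \<sigma>: "\<sigma> > 1/2" and n: "n \<ge> 1" and K: "finite K" "K \<inter> {- int n..int n} = {}"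
  shows "(\<Sum>k\<in>K. 1 / (1 + (real_of_int k)\<^sup>2) powr \<sigma>) \<le> 2 * (real n powr (1 - 2 * \<sigma>) / (2 * \<sigma> - 1))"
proof -
  have "1 / (1 + (real_of_int k)\<^sup>2) powr \<sigma> \<le> real (nat \<bar>k\<bar>) powr (- (2 * \<sigma>))" if "k \<in> K" for k
  proof -
    have "k \<notin> {- int n..int n}" using that K(2) by blast
    then have "1 \<le> \<bar>k\<bar>" using n by auto
    then have k: "1 \<le> \<bar>real_of_int k\<bar>" by (metis of_int_1_le_iff of_int_abs)
    have "0 < (1 + (real_of_int k)\<^sup>2) powr \<sigma>"
      using add_pos_nonneg[OF zero_less_one zero_le_power2[of "real_of_int k"]] by simp
    have "\<bar>real_of_int k\<bar> powr (2 * \<sigma>) = ((real_of_int k)\<^sup>2) powr \<sigma>"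
      using k by (simp add: powr_powr[symmetric] powr_numeral)
    also have "\<dots> \<le> (1 + (real_of_int k)\<^sup>2) powr \<sigma>" using \<sigma> by (intro powr_mono2) auto
    finally have "1 / (1 + (real_of_int k)\<^sup>2) powr \<sigma> \<le> 1 / \<bar>real_of_int k\<bar> powr (2 * \<sigma>)"
      using k \<open>0 < (1 + (real_of_int k)\<^sup>2) powr \<sigma>\<close> by (intro divide_left_mono) auto
    then show ?thesis using k by (simp add: powr_minus_divide)
  qed
  then have "(\<Sum>k\<in>K. 1 / (1 + (real_of_int k)\<^sup>2) powr \<sigma>) \<le> (\<Sum>k\<in>K. real (nat \<bar>k\<bar>) powr (- (2 * \<sigma>)))"
    by (rule sum_mono)
  also have "\<dots> \<le> 2 * (real n powr (1 - 2 * \<sigma>) / (2 * \<sigma> - 1))"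
    by (rule sum_abs_index_le[OF K]) (use sum_powr_tail_le[of "2 * \<sigma>" n] \<sigma> n in auto)
  finally show ?thesis .
qed

lemma Sobolev_tail_sum_le:
  fixes f :: "real \<Rightarrow> complex"
  assumes \<sigma>: "\<sigma> > 1/2" and sob: "in_Sobolev \<sigma> f" and n: "n \<ge> 1"
    and K: "finite K" "K \<inter> {- int n..int n} = {}"
  shows "(\<Sum>k\<in>K. norm (fourier_coeff f k))
     \<le> (\<sigma> - 1/2) powr (-1/2) * Sobolev_norm \<sigma> f * real n powr (- \<sigma> + 1/2)"
proof -
  define w where "w k = (1 + (real_of_int k)\<^sup>2) powr \<sigma>" for k :: int
  define g where "g k = (norm (fourier_coeff f k))\<^sup>2 * w k" for k
  have w: "w k > 0" for k
    using add_pos_nonneg[OF zero_less_one zero_le_power2[of "real_of_int k"]] by (simp add: w_def)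
  have g_sum: "(\<Sum>k\<in>K. g k) \<le> (Sobolev_norm \<sigma> f)\<^sup>2"
  proof -
    have "(\<Sum>k\<in>K. g k) \<le> (\<Sum>\<^sub>\<infinity>k. g k)"
      using sob K(1) by (intro finite_sum_le_infsum) (auto simp: g_def w_def in_Sobolev_def)
    also have "\<dots> = (Sobolev_norm \<sigma> f)\<^sup>2"
      unfolding Sobolev_norm_def g_def w_def by (simp add: infsum_nonneg)
    finally show ?thesis .
  qed
  have "(\<Sum>k\<in>K. norm (fourier_coeff f k))\<^sup>2
      = (\<Sum>k\<in>K. (norm (fourier_coeff f k) * sqrt (w k)) * (1 / sqrt (w k)))\<^sup>2"
    using w by (simp add: less_imp_le less_imp_neq[symmetric])
  also have "\<dots> \<le> (\<Sum>k\<in>K. (norm (fourier_coeff f k) * sqrt (w k))\<^sup>2) * (\<Sum>k\<in>K. (1 / sqrt (w k))\<^sup>2)"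
    by (rule Cauchy_Schwarz_ineq_sum)
  also have "\<dots> = (\<Sum>k\<in>K. g k) * (\<Sum>k\<in>K. 1 / w k)"
    using w by (simp add: g_def power_mult_distrib power_divide less_imp_le)
  also have "\<dots> \<le> (Sobolev_norm \<sigma> f)\<^sup>2 * (2 * (real n powr (1 - 2 * \<sigma>) / (2 * \<sigma> - 1)))"
    using g_sum sum_inverse_Sobolev_weight_le[OF \<sigma> n K] w
    by (intro mult_mono sum_nonneg) (auto simp: g_def w_def less_imp_le)
  also have "\<dots> = ((\<sigma> - 1/2) powr (-1/2) * Sobolev_norm \<sigma> f * real n powr (- \<sigma> + 1/2))\<^sup>2"
  proof -
    have "((\<sigma> - 1/2) powr (-1/2))\<^sup>2 = 2 / (2 * \<sigma> - 1)"
      using \<sigma> by (simp add: power2_eq_square powr_add[symmetric] powr_neg_one field_simps)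
    moreover have "(real n powr (- \<sigma> + 1/2))\<^sup>2 = real n powr (1 - 2 * \<sigma>)"
      by (simp add: power2_eq_square powr_add[symmetric])
    ultimately show ?thesis by (simp add: power_mult_distrib)
  qed
  finally show ?thesis
    by (rule power2_le_imp_le) (simp add: Sobolev_norm_def infsum_nonneg)
qed

section \<open>Functions analytic on a strip\<close>

lemma convex_strip: "convex {z::complex. \<bar>Im z\<bar> < r}"
proof -
  have "{z::complex. \<bar>Im z\<bar> < r} = {z. Im z < r} \<inter> {z. Im z > - r}" by auto
  then show ?thesis by (simp add: convex_Int convex_halfspace_Im_lt convex_halfspace_Im_gt)
qed

lemma open_strip: "open {z::complex. \<bar>Im z\<bar> < r}"
  by (intro open_Collect_less continuous_intros)

lemma holomorphic_periodic_on_strip: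
  assumes hol: "g holomorphic_on {z. \<bar>Im z\<bar> < r}"
    and per: "\<And>x::real. g (of_real x + 1) = g (of_real x)"
    and z: "\<bar>Im z\<bar> < r"
  shows "g (z + 1) = g z"
proof -
  define S where "S = {z::complex. \<bar>Im z\<bar> < r}"
  have r: "0 < r" using z by linarith
  have "g (z + 1) - g z = 0"
  proof (rule analytic_continuation[where f = "\<lambda>z. g (z + 1) - g z" and S = S and U = \<real> and \<xi> = 0])
    have "(g \<circ> (\<lambda>z. z + 1)) holomorphic_on S"
      using hol unfolding S_def by (intro holomorphic_on_compose_gen) (auto intro!: holomorphic_intros)
    then show "(\<lambda>z. g (z + 1) - g z) holomorphic_on S"
      using hol unfolding S_def by (auto intro!: holomorphic_intros simp: o_def)
    show "open S" "connected S"
      unfolding S_def by (auto intro: open_strip convex_connected convex_strip)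
    show "\<real> \<subseteq> S" "0 \<in> S" "z \<in> S" using r z by (auto simp: S_def elim: Reals_cases)
    show "(0::complex) islimpt \<real>"
    proof (unfold islimpt_approachable, intro allI impI)
      fix e :: real assume "0 < e"
      then show "\<exists>x\<in>\<real>. x \<noteq> 0 \<and> dist x (0::complex) < e"
        by (intro bexI[of _ "of_real (e / 2)"]) auto
    qed
    show "g (w + 1) - g w = 0" if "w \<in> \<real>" for w
      using that per by (auto elim: Reals_cases)
  qed
  then show ?thesis by simp
qed

lemma periodic_holomorphic_horizontal_integrals:
  assumes hol: "F holomorphic_on {z. \<bar>Im z\<bar> < r}"
    and per: "\<And>z. \<bar>Im z\<bar> < r \<Longrightarrow> F (z + 1) = F z"
  obtains C where "\<And>y. \<bar>y\<bar> < r \<Longrightarrow> ((\<lambda>x. F (of_real x + \<i> * of_real y)) has_integral C) {0..1}"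
proof -
  define S where "S = {z::complex. \<bar>Im z\<bar> < r}"
  have S: "open S" "convex S" unfolding S_def by (rule open_strip, rule convex_strip)
  have shift: "z + 1 \<in> S" if "z \<in> S" for z using that by (simp add: S_def)
  obtain \<Phi> where \<Phi>_within: "\<And>z. z \<in> S \<Longrightarrow> (\<Phi> has_field_derivative F z) (at z within S)"
    using holomorphic_convex_primitive'[OF S(2,1) hol[folded S_def]] by blast
  have \<Phi>: "(\<Phi> has_field_derivative F z) (at z)" if "z \<in> S" for z
    using \<Phi>_within[OF that] at_within_open[OF that S(1)] by simp
  \<comment> \<open>periodicity of \<open>F\<close> makes \<open>\<Phi>(z + 1) - \<Phi> z\<close> have derivative zero, so it is a constant \<open>C\<close>\<close>
  obtain C where C: "\<And>z. z \<in> S \<Longrightarrow> \<Phi> (z + 1) - \<Phi> z = C"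
  proof -
    have "\<exists>C. \<forall>z\<in>S. \<Phi> (z + 1) - \<Phi> z = C"
    proof (rule has_field_derivative_zero_constant[OF S(2)])
      fix z assume z: "z \<in> S"
      have "((\<lambda>z. \<Phi> (z + 1) - \<Phi> z) has_field_derivative F (z + 1) - F z) (at z)"
        using \<Phi>[OF shift[OF z]] \<Phi>[OF z] by (intro derivative_intros) (simp_all add: DERIV_shift)
      then show "((\<lambda>z. \<Phi> (z + 1) - \<Phi> z) has_field_derivative 0) (at z within S)"
        using per z by (simp add: S_def has_field_derivative_at_within)
    qed
    then show ?thesis using that by blast
  qed
  show ?thesis
  proof (rule that)
    fix y :: real assume y: "\<bar>y\<bar> < r"
    have on_line: "of_real x + \<i> * of_real y \<in> S" for x using y by (simp add: S_def)
    have "((\<lambda>x. F (of_real x + \<i> * of_real y)) has_integral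
        \<Phi> (of_real 1 + \<i> * of_real y) - \<Phi> (of_real 0 + \<i> * of_real y)) {0..1}"
    proof (rule fundamental_theorem_of_calculus)
      fix x :: real
      have "((\<lambda>w. \<Phi> (w + \<i> * of_real y)) has_field_derivative F (of_real x + \<i> * of_real y)) (at (of_real x))"
        using \<Phi>[OF on_line[of x]] by (simp add: DERIV_shift)
      then show "((\<lambda>x. \<Phi> (of_real x + \<i> * of_real y)) has_vector_derivative F (of_real x + \<i> * of_real y))
          (at x within {0..1})"
        by (rule has_vector_derivative_real_field)
    qed simp
    then show "((\<lambda>x. F (of_real x + \<i> * of_real y)) has_integral C) {0..1}"
      using C[OF on_line[of 0]] by (simp add: add.commute)
  qed
qed

lemma fourier_coeff_on_shifted_line:
  fixes f :: "real \<Rightarrow> complex"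
  assumes hol: "g holomorphic_on {z. \<bar>Im z\<bar> < r0}" and gf: "\<And>x. g (of_real x) = f x"
    and per: "\<And>x. f (x + 1) = f x" and y: "\<bar>y\<bar> < r0"
  shows "((\<lambda>x. g (of_real x + \<i> * of_real y) * exp (- (2 * pi * \<i> * of_int k * (of_real x + \<i> * of_real y))))
      has_integral fourier_coeff f k) {0..1}"
proof -
  define c where "c = 2 * pi * \<i> * of_int k"
  define F where "F z = g z * exp (- (c * z))" for z
  have "g (of_real x + 1) = g (of_real x)" for x
    using gf[of "x + 1"] gf[of x] per[of x] by simp
  moreover have "exp c = 1"
    using exp_integer_2pi[of "of_int k"] by (simp add: c_def mult_ac)
  ultimately have F_per: "F (z + 1) = F z" if "\<bar>Im z\<bar> < r0" for z
    using holomorphic_periodic_on_strip[OF hol _ that] by (simp add: F_def distrib_left exp_diff)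
  have "F holomorphic_on {z. \<bar>Im z\<bar> < r0}"
    unfolding F_def by (intro holomorphic_intros hol)
  then obtain C where C: "\<And>y. \<bar>y\<bar> < r0 \<Longrightarrow> ((\<lambda>x. F (of_real x + \<i> * of_real y)) has_integral C) {0..1}"
    using periodic_holomorphic_horizontal_integrals F_per by metis
  have "(\<lambda>x. f x * trig_exp (- k) x) = (\<lambda>x. F (of_real x + \<i> * of_real 0))"
    by (simp add: fun_eq_iff F_def c_def trig_exp_def gf)
  then have "fourier_coeff f k = C"
    using C[of 0] y by (simp add: fourier_coeff_eq integral_unique)
  then show ?thesis using C[OF y] by (simp add: F_def c_def)
qed

theorem fourier_coeff_exp_decay:
  fixes f :: "real \<Rightarrow> complex"
  assumes hol: "g holomorphic_on {z. \<bar>Im z\<bar> < r0}" and gf: "\<And>x. g (of_real x) = f x"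
    and per: "\<And>x. f (x + 1) = f x" and r: "0 < r" "r < r0"
  obtains M where "M \<ge> 0" "\<And>k. norm (fourier_coeff f k) \<le> M * exp (- 2 * pi * r * \<bar>real_of_int k\<bar>)"
proof -
  define R where "R = cbox (Complex 0 (- r)) (Complex 1 r)"
  have "R \<subseteq> {z. \<bar>Im z\<bar> < r0}" using r by (auto simp: R_def in_cbox_complex_iff)
  then have "compact (g ` R)"
    using hol unfolding R_def
    by (intro compact_continuous_image continuous_on_subset[OF holomorphic_on_imp_continuous_on]) auto
  then obtain M where M: "M > 0" "\<And>z. z \<in> R \<Longrightarrow> norm (g z) \<le> M"
    by (metis bounded_pos compact_imp_bounded image_eqI)
  have "norm (fourier_coeff f k) \<le> M * exp (- 2 * pi * r * \<bar>real_of_int k\<bar>)" for k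
  proof -
    \<comment> \<open>the line \<open>Im z = y\<close> lies on the side of the real axis where \<open>exp (- 2 \<pi> i k z)\<close> decays\<close>
    define y where "y = - r * sgn (real_of_int k)"
    have y: "\<bar>y\<bar> \<le> r" using r by (auto simp: y_def abs_mult abs_sgn_eq)
    have "norm (g (of_real x + \<i> * of_real y) * exp (- (2 * pi * \<i> * of_int k * (of_real x + \<i> * of_real y))))
        \<le> M * exp (- 2 * pi * r * \<bar>real_of_int k\<bar>)"
      if "x \<in> cbox 0 1" for x
    proof -
      have "of_real x + \<i> * of_real y \<in> R"
        using that y by (auto simp: R_def in_cbox_complex_iff)
      moreover have decay: "norm (exp (- (2 * pi * \<i> * of_int k * (of_real x + \<i> * of_real y))))
          = exp (- 2 * pi * r * \<bar>real_of_int k\<bar>)"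
        by (simp add: norm_exp_eq_Re y_def abs_sgn mult_ac)
      ultimately show ?thesis
        unfolding norm_mult decay using M by (intro mult_right_mono) auto
    qed
    moreover have "\<bar>y\<bar> < r0" using y r by linarith
    ultimately show ?thesis
      using has_integral_bound[OF _ fourier_coeff_on_shifted_line[OF hol gf per, unfolded interval_cbox]] M(1)
      by fastforce
  qed
  with M(1) show ?thesis using that by (metis less_imp_le)
qed

lemma ls_error_Sobolev:
  assumes MZ: "MZ_family L X \<tau> A B" and AB: "A \<le> B" and f_cont: "cont_on_torus f"
    and \<sigma>: "\<sigma> > 1/2" and sob: "in_Sobolev \<sigma> f" and n: "n \<ge> 1" and ls: "ls_solution L X \<tau> f n p"
  shows "L2norm (\<lambda>x. f x - p x)
      \<le> (\<sigma> - 1/2) powr (-1/2) * sqrt (1 + (B / A)\<^sup>2) * Sobolev_norm \<sigma> f * real n powr (- \<sigma> + 1/2)"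
  using ls_error_le_fourier_tail[OF MZ AB f_cont n ls Sobolev_tail_sum_le[OF \<sigma> sob n]]
  by (simp add: ac_simps)

lemma ls_error_analytic:
  assumes MZ: "MZ_family L X \<tau> A B" and AB: "A \<le> B" and f_cont: "cont_on_torus f"
    and \<rho>0: "\<rho>0 > 0" and hol: "g holomorphic_on {z. \<bar>Im z\<bar> < \<rho>0}" and gf: "\<And>x. g (of_real x) = f x"
    and \<rho>: "\<rho> < \<rho>0" and ls: "\<And>n. n \<ge> 1 \<Longrightarrow> ls_solution L X \<tau> f n (P n)"
  shows "(\<lambda>n. L2norm (\<lambda>x. f x - P n x)) \<in> O(\<lambda>n. exp (- \<rho> * real n))"
proof -
  define r where "r = max \<rho> (\<rho>0 / 2)"
  have r: "0 < r" "r < \<rho>0" using \<rho>0 \<rho> by (auto simp: r_def)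
  have "1 * r \<le> (2 * pi) * r" using r(1) pi_gt3 by (intro mult_right_mono) auto
  then have \<rho>_le: "\<rho> \<le> 2 * pi * r" by (simp add: r_def)
  have per: "\<And>x. f (x + 1) = f x" using f_cont by (simp add: cont_on_torus_def)
  obtain M where M: "M \<ge> 0" "\<And>k. norm (fourier_coeff f k) \<le> M * exp (- 2 * pi * r * \<bar>real_of_int k\<bar>)"
    using fourier_coeff_exp_decay[OF hol gf per r(1,2)] by blast
  define q where "q = exp (- 2 * pi * r)"
  have q: "0 \<le> q" "q < 1" using r(1) by (auto simp: q_def)
  have q_pow: "q ^ j = exp (- 2 * pi * r * real j)" for j
    by (simp add: q_def exp_of_nat_mult[symmetric] mult_ac)
  define C where "C = sqrt (1 + (B / A)\<^sup>2) * (2 * M / (1 - q))"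
  have "L2norm (\<lambda>x. f x - P n x) \<le> C * exp (- \<rho> * real n)" if n: "n \<ge> 1" for n
  proof -
    have "(\<Sum>k\<in>K. norm (fourier_coeff f k)) \<le> 2 * (M * q ^ Suc n / (1 - q))"
      if "finite K" "K \<inter> {- int n..int n} = {}" for K
      using M q that by (intro sum_geometric_coeff_le) (simp_all add: q_pow)
    from ls_error_le_fourier_tail[OF MZ AB f_cont n ls[OF n] this]
    have "L2norm (\<lambda>x. f x - P n x) \<le> C * q ^ Suc n"
      by (simp add: C_def field_simps)
    also have "\<dots> \<le> C * q ^ n"
      using q M(1) by (intro mult_left_mono power_decreasing) (auto simp: C_def)
    also have "\<dots> \<le> C * exp (- \<rho> * real n)"
      unfolding q_pow using \<rho>_le q M(1) by (intro mult_left_mono) (auto simp: C_def mult_right_mono)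
    finally show ?thesis .
  qed
  then show ?thesis
    by (intro bigoI[where c = C] eventually_at_top_linorderI[of 1]) (simp add: L2norm_nonneg)
qed

theorem theorem2p2:
  fixes L :: "nat \<Rightarrow> nat" and X \<tau> :: "nat \<Rightarrow> nat \<Rightarrow> real" and A B :: real
    and f :: "real \<Rightarrow> complex"
  assumes MZ: "MZ_family L X \<tau> A B"
    and AB: "A \<le> B"
    and f_cont: "cont_on_torus f"
  shows "(\<forall>\<sigma>::real. \<sigma> > 1/2 \<longrightarrow> in_Sobolev \<sigma> f \<longrightarrow>
            (\<forall>n::nat. n \<ge> 1 \<longrightarrow> (\<forall>p. ls_solution L X \<tau> f n p \<longrightarrow>
               L2norm (\<lambda>x. f x - p x)
                 \<le> (\<sigma> - 1/2) powr (-1/2) * sqrt (1 + (B / A)\<^sup>2) * Sobolev_norm \<sigma> f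
                    * real n powr (- \<sigma> + 1/2))))
       \<and> (\<forall>\<rho>0::real. \<forall>g :: complex \<Rightarrow> complex.
            \<rho>0 > 0 \<longrightarrow> g holomorphic_on {z. \<bar>Im z\<bar> < \<rho>0} \<longrightarrow>
            (\<forall>x::real. g (complex_of_real x) = f x) \<longrightarrow>
            (\<forall>\<rho>::real. \<rho> < \<rho>0 \<longrightarrow>
               (\<forall>P :: nat \<Rightarrow> real \<Rightarrow> complex. (\<forall>n\<ge>1. ls_solution L X \<tau> f n (P n)) \<longrightarrow>
                  (\<lambda>n. L2norm (\<lambda>x. f x - P n x)) \<in> O(\<lambda>n. exp (- \<rho> * real n)))))"
  using ls_error_Sobolev[OF MZ AB f_cont] ls_error_analytic[OF MZ AB f_cont] by blast

end
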